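(* For integers $i,j\geq 0$ and $t\geq 1$ let $h_{i,j}(t)$ be the number of proper hyperbinary expansions $(\varepsilon_{\nu-1},\ldots,\varepsilon_0)$ of $t-1$ such that $|\{0\leq \ell<\nu:\varepsilon_\ell=2\}|=i$ and $|\{0\leq \ell<\nu:\varepsilon_\ell=0\}|=j$. Then for all $k\in\mathbb{Z}$ and $t\ge1$, \[ \varphi(k,t)=\sum_{\substack{i,j\geq 0\\i-j=k}}2^{-(i+j)}h_{i,j}(t). \]
   Context: A hyperbinary expansion of a nonnegative integer $n$ is a sequence $(\varepsilon_{\nu-1},\ldots,\varepsilon_0)\in \{0,1,2\}^{\nu}$ ($\nu\ge0$) with $\sum_{0\leq i<\nu}\varepsilon_i2^i=n$; it is proper if either $\nu=0$, or $\nu>0$ and $\varepsilon_{\nu-1}\neq 0$. Define numbers $\varphi(k,t)$ for $k\in\mathbb{Z}$ and integers $t\ge1$ by $\varphi(0,1)=1$, $\varphi(k,1)=0$ for $k\neq0$, and for $t\ge1$: $\varphi(k,2t)=\varphi(k,t)$, $\varphi(k,2t+1)=\frac12\varphi(k-1,t)+\frac12\varphi(k+1,t+1)$. *)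

theory Defs
  imports "HOL-Analysis.Analysis"
begin

text \<open>A digit sequence (eps_{nu-1},...,eps_0) is represented as a list es with
  es ! l = eps_l (least significant digit first), length es = nu.\<close>

definition hyperbinary_value :: "nat list \<Rightarrow> nat" where
  "hyperbinary_value es = (\<Sum>l<length es. es ! l * 2 ^ l)"

definition is_hyperbinary_exp :: "nat \<Rightarrow> nat list \<Rightarrow> bool" where
  "is_hyperbinary_exp n es \<longleftrightarrow> set es \<subseteq> {0,1,2} \<and> hyperbinary_value es = n"

definition is_proper_hyperbinary_exp :: "nat \<Rightarrow> nat list \<Rightarrow> bool" where
  "is_proper_hyperbinary_exp n es \<longleftrightarrow>
     is_hyperbinary_exp n es \<and> (es = [] \<or> last es \<noteq> 0)"

definition hcount :: "nat \<Rightarrow> nat \<Rightarrow> nat \<Rightarrow> nat" where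
  "hcount i j t = card {es. is_proper_hyperbinary_exp (t - 1) es
       \<and> card {l. l < length es \<and> es ! l = 2} = i
       \<and> card {l. l < length es \<and> es ! l = 0} = j}"

function phi :: "int \<Rightarrow> nat \<Rightarrow> real" where
  "phi k t = (if t \<le> 1 then (if t = 1 \<and> k = 0 then 1 else 0)
     else if even t then phi k (t div 2)
     else phi (k - 1) (t div 2) / 2 + phi (k + 1) (t div 2 + 1) / 2)"
  by auto
termination
  by (relation "Wellfounded.measure snd") (auto elim!: oddE)

end

theory Submission
  imports Defs
begin

text \<open>Splitting off the least significant digit gives, for proper expansions,
  \<open>E(2m+1) = 1\<cdot>E(m)\<close> and \<open>E(2m) = 0\<cdot>E(m) \<union> 2\<cdot>E(m-1)\<close> (\<open>m > 0\<close>), where \<open>E(n)\<close> is the set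
  of proper expansions of \<open>n\<close>. A digit 2 (resp. 0) shifts \<open>i - j\<close> by \<open>+1\<close> (resp. \<open>-1\<close>)
  and halves the weight \<open>2^-(i+j)\<close>, so the right-hand side, as a function of \<open>(k, t)\<close>,
  obeys the recursion defining \<open>\<phi>\<close>.\<close>

lemma hyperbinary_value_Nil [simp]: "hyperbinary_value [] = 0"
  by (simp add: hyperbinary_value_def)

lemma hyperbinary_value_Cons [simp]:
  "hyperbinary_value (a # r) = a + 2 * hyperbinary_value r"
proof -
  have "hyperbinary_value (a # r) = a + (\<Sum>l<length r. r ! l * 2 ^ Suc l)"
    unfolding hyperbinary_value_def by (simp only: length_Cons sum.lessThan_Suc_shift) simp
  also have "\<dots> = a + 2 * hyperbinary_value r"
    unfolding hyperbinary_value_def by (simp add: sum_distrib_left mult_ac)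
  finally show ?thesis .
qed

lemma proper_hyperbinary_exp_Nil:
  "is_proper_hyperbinary_exp n [] \<longleftrightarrow> n = 0"
  by (auto simp: is_proper_hyperbinary_exp_def is_hyperbinary_exp_def)

lemma proper_hyperbinary_exp_Cons:
  "is_proper_hyperbinary_exp n (a # r) \<longleftrightarrow>
     a \<le> 2 \<and> n = a + 2 * hyperbinary_value r
     \<and> is_proper_hyperbinary_exp (hyperbinary_value r) r \<and> (r = [] \<longrightarrow> a \<noteq> 0)"
  by (cases r) (auto simp: is_proper_hyperbinary_exp_def is_hyperbinary_exp_def)

lemma hyperbinary_value_proper:
  "is_proper_hyperbinary_exp n es \<Longrightarrow> hyperbinary_value es = n"
  by (simp add: is_proper_hyperbinary_exp_def is_hyperbinary_exp_def)

definition proper_expansions :: "nat \<Rightarrow> nat list set" where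
  "proper_expansions n = {es. is_proper_hyperbinary_exp n es}"

lemma proper_expansions_0: "proper_expansions 0 = {[]}"
proof -
  have "es = []" if "is_proper_hyperbinary_exp 0 es" for es
    using that by (induction es) (auto simp: proper_hyperbinary_exp_Cons)
  then show ?thesis
    by (auto simp: proper_expansions_def proper_hyperbinary_exp_Nil)
qed

lemma proper_expansions_odd:
  "proper_expansions (Suc (2 * m)) = Cons 1 ` proper_expansions m"
proof (intro equalityI subsetI)
  fix es assume "es \<in> proper_expansions (Suc (2 * m))"
  then have es: "is_proper_hyperbinary_exp (Suc (2 * m)) es"
    by (simp add: proper_expansions_def)
  then obtain a r where "es = a # r"
    by (cases es) (auto simp: proper_hyperbinary_exp_Nil)
  moreover from es this have "a \<le> 2" "Suc (2 * m) = a + 2 * hyperbinary_value r"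
      "is_proper_hyperbinary_exp (hyperbinary_value r) r"
    by (auto simp: proper_hyperbinary_exp_Cons)
  moreover from this(1,2) have "a = 1" "hyperbinary_value r = m"
    by presburger+
  ultimately show "es \<in> Cons 1 ` proper_expansions m"
    by (auto simp: proper_expansions_def)
next
  fix es assume "es \<in> Cons 1 ` proper_expansions m"
  then show "es \<in> proper_expansions (Suc (2 * m))"
    by (auto simp: proper_expansions_def proper_hyperbinary_exp_Cons hyperbinary_value_proper)
qed

lemma proper_expansions_even:
  assumes "m > 0"
  shows "proper_expansions (2 * m) =
           Cons 0 ` proper_expansions m \<union> Cons 2 ` proper_expansions (m - 1)"
proof (intro equalityI subsetI)
  fix es assume "es \<in> proper_expansions (2 * m)"
  then have es: "is_proper_hyperbinary_exp (2 * m) es"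
    by (simp add: proper_expansions_def)
  then obtain a r where "es = a # r"
    using assms by (cases es) (auto simp: proper_hyperbinary_exp_Nil)
  moreover from es this have "a \<le> 2" "2 * m = a + 2 * hyperbinary_value r"
      "is_proper_hyperbinary_exp (hyperbinary_value r) r"
    by (auto simp: proper_hyperbinary_exp_Cons)
  moreover from this(1,2) have
    "(a = 0 \<and> hyperbinary_value r = m) \<or> (a = 2 \<and> hyperbinary_value r = m - 1)"
    by presburger
  ultimately show "es \<in> Cons 0 ` proper_expansions m \<union> Cons 2 ` proper_expansions (m - 1)"
    by (auto simp: proper_expansions_def)
next
  fix es assume "es \<in> Cons 0 ` proper_expansions m \<union> Cons 2 ` proper_expansions (m - 1)"
  moreover have "r \<noteq> []" if "r \<in> proper_expansions m" for r
    using that assms by (auto simp: proper_expansions_def proper_hyperbinary_exp_Nil)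
  ultimately show "es \<in> proper_expansions (2 * m)"
    using assms by (auto simp: proper_expansions_def proper_hyperbinary_exp_Cons
                               hyperbinary_value_proper)
qed

lemma finite_proper_expansions: "finite (proper_expansions n)"
proof (induction n rule: less_induct)
  case (less n)
  have "n = 0 \<or> (\<exists>m. n = 2 * m \<and> m > 0) \<or> (\<exists>m. n = 2 * m + 1)"
    by presburger
  then show ?case
    using less by (auto simp: proper_expansions_0 proper_expansions_even proper_expansions_odd)
qed

definition digit_count :: "nat \<Rightarrow> nat list \<Rightarrow> nat" where
  "digit_count x es = length (filter (\<lambda>y. y = x) es)"

lemma card_digit_positions:
  "card {l. l < length es \<and> es ! l = x} = digit_count x es"
  by (simp add: digit_count_def length_filter_conv_card)

definition expansion_weight :: "int \<Rightarrow> nat list \<Rightarrow> real" where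
  "expansion_weight k es =
     (if int (digit_count 2 es) - int (digit_count 0 es) = k
      then (1 / 2) ^ (digit_count 2 es + digit_count 0 es) else 0)"

lemma expansion_weight_Nil: "expansion_weight k [] = (if k = 0 then 1 else 0)"
  by (simp add: expansion_weight_def digit_count_def)

lemma expansion_weight_Cons_0: "expansion_weight k (0 # r) = expansion_weight (k + 1) r / 2"
  by (auto simp: expansion_weight_def digit_count_def)

lemma expansion_weight_Cons_1: "expansion_weight k (1 # r) = expansion_weight k r"
  by (simp add: expansion_weight_def digit_count_def)

lemma expansion_weight_Cons_2: "expansion_weight k (2 # r) = expansion_weight (k - 1) r / 2"
  by (auto simp: expansion_weight_def digit_count_def)

definition weighted_count :: "int \<Rightarrow> nat \<Rightarrow> real" where
  "weighted_count k t = (\<Sum>es\<in>proper_expansions (t - 1). expansion_weight k es)"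

lemma weighted_count_1: "weighted_count k 1 = (if k = 0 then 1 else 0)"
  by (simp add: weighted_count_def proper_expansions_0 expansion_weight_Nil)

lemma weighted_count_even:
  assumes "s \<ge> 1"
  shows "weighted_count k (2 * s) = weighted_count k s"
proof -
  have "2 * s - 1 = Suc (2 * (s - 1))"
    using assms by simp
  then have "proper_expansions (2 * s - 1) = Cons 1 ` proper_expansions (s - 1)"
    by (simp only: proper_expansions_odd)
  then show ?thesis
    by (simp add: weighted_count_def sum.reindex expansion_weight_Cons_1[simplified])
qed

lemma weighted_count_odd:
  assumes "s \<ge> 1"
  shows "weighted_count k (Suc (2 * s)) =
           weighted_count (k - 1) s / 2 + weighted_count (k + 1) (s + 1) / 2"
proof -
  have "weighted_count k (Suc (2 * s)) =
          (\<Sum>es\<in>Cons 0 ` proper_expansions s \<union> Cons 2 ` proper_expansions (s - 1).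
             expansion_weight k es)"
    using assms by (simp add: weighted_count_def proper_expansions_even)
  also have "\<dots> = (\<Sum>es\<in>Cons 0 ` proper_expansions s. expansion_weight k es)
                 + (\<Sum>es\<in>Cons 2 ` proper_expansions (s - 1). expansion_weight k es)"
    by (rule sum.union_disjoint) (auto simp: finite_proper_expansions)
  also have "\<dots> = weighted_count (k + 1) (s + 1) / 2 + weighted_count (k - 1) s / 2"
    by (simp add: sum.reindex expansion_weight_Cons_0 expansion_weight_Cons_2
                  weighted_count_def sum_divide_distrib)
  finally show ?thesis by simp
qed

lemma phi_1: "phi k 1 = (if k = 0 then 1 else 0)"
  by (subst phi.simps) simp

lemma phi_even: "s \<ge> 1 \<Longrightarrow> phi k (2 * s) = phi k s"
  by (subst phi.simps) simp

lemma phi_odd: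
  "s \<ge> 1 \<Longrightarrow> phi k (Suc (2 * s)) = phi (k - 1) s / 2 + phi (k + 1) (s + 1) / 2"
  by (subst phi.simps) simp

lemma phi_eq_weighted_count: "t \<ge> 1 \<Longrightarrow> phi k t = weighted_count k t"
proof (induction t arbitrary: k rule: less_induct)
  case (less t)
  have "t = 1 \<or> (\<exists>s. t = 2 * s \<and> s \<ge> 1) \<or> (\<exists>s. t = Suc (2 * s) \<and> s \<ge> 1)"
    using \<open>t \<ge> 1\<close> by presburger
  then consider "t = 1" | s where "t = 2 * s" "s \<ge> 1" | s where "t = Suc (2 * s)" "s \<ge> 1"
    by blast
  then show ?case
  proof cases
    case 1
    then show ?thesis by (simp only: phi_1 weighted_count_1)
  next
    case (2 s)
    then show ?thesis
      using less.IH[of s] by (simp add: phi_even weighted_count_even)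
  next
    case (3 s)
    then show ?thesis
      using less.IH[of s] less.IH[of "s + 1"] by (simp add: phi_odd weighted_count_odd)
  qed
qed

lemma infsum_card_fibres:
  fixes w :: "'b \<Rightarrow> real"
  assumes "finite S"
  shows "(\<Sum>\<^sub>\<infinity>p\<in>A. w p * real (card {x\<in>S. g x = p})) = (\<Sum>x\<in>{x\<in>S. g x \<in> A}. w (g x))"
proof -
  let ?T = "g ` S \<inter> A"
  have empty_fibre: "{x\<in>S. g x = p} = {}" if "p \<notin> g ` S" for p
    using that by auto
  have "(\<Sum>\<^sub>\<infinity>p\<in>A. w p * real (card {x\<in>S. g x = p})) =
          (\<Sum>\<^sub>\<infinity>p\<in>?T. w p * real (card {x\<in>S. g x = p}))"
  proof (rule infsum_cong_neutral)
    fix p assume "p \<in> A - ?T"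
    then have "p \<notin> g ` S"
      by blast
    then show "w p * real (card {x\<in>S. g x = p}) = 0"
      by (simp add: empty_fibre)
  qed auto
  also have "\<dots> = (\<Sum>p\<in>?T. w p * real (card {x\<in>S. g x = p}))"
    using assms by simp
  also have "\<dots> = (\<Sum>p\<in>?T. \<Sum>x\<in>{x\<in>{x\<in>S. g x \<in> A}. g x = p}. w (g x))"
  proof (rule sum.cong)
    fix p assume "p \<in> ?T"
    then have "{x\<in>{x\<in>S. g x \<in> A}. g x = p} = {x\<in>S. g x = p}"
      by auto
    then show "w p * real (card {x\<in>S. g x = p}) =
                 (\<Sum>x\<in>{x\<in>{x\<in>S. g x \<in> A}. g x = p}. w (g x))"
      by simp
  qed simp
  also have "\<dots> = (\<Sum>x\<in>{x\<in>S. g x \<in> A}. w (g x))"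
    using assms by (intro sum.group) auto
  finally show ?thesis .
qed

theorem proposition3p3:
  fixes k :: int and t :: nat
  assumes "t \<ge> 1"
  shows "phi k t = (\<Sum>\<^sub>\<infinity>(i, j) \<in> {p :: nat \<times> nat. int (fst p) - int (snd p) = k}.
                      (1 / 2) ^ (i + j) * real (hcount i j t))"
proof -
  define E where "E = proper_expansions (t - 1)"
  define counts where "counts es = (digit_count 2 es, digit_count 0 es)" for es
  define w :: "nat \<times> nat \<Rightarrow> real" where "w = (\<lambda>(i, j). (1 / 2) ^ (i + j))"
  let ?A = "{p :: nat \<times> nat. int (fst p) - int (snd p) = k}"
  have "hcount i j t = card {es\<in>E. counts es = (i, j)}" for i j
    unfolding hcount_def E_def proper_expansions_def counts_def card_digit_positions by simp
  then have "(\<Sum>\<^sub>\<infinity>(i, j)\<in>?A. (1 / 2) ^ (i + j) * real (hcount i j t)) =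
               (\<Sum>\<^sub>\<infinity>p\<in>?A. w p * real (card {es\<in>E. counts es = p}))"
    by (intro infsum_cong) (auto simp: w_def)
  also have "\<dots> = (\<Sum>es\<in>{es\<in>E. counts es \<in> ?A}. w (counts es))"
    by (simp add: infsum_card_fibres E_def finite_proper_expansions)
  also have "\<dots> = weighted_count k t"
    by (simp add: weighted_count_def expansion_weight_def E_def counts_def w_def
                  sum.inter_filter[symmetric] finite_proper_expansions)
  finally show ?thesis
    using phi_eq_weighted_count[OF assms] by simp
qed

end
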